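(* Assume (A1) and (A2), and set $\tilde\eta=2\eta\|\mathbf{u}\|_2^2/m$. Let $k\ge1$ with $\bar T_k<\infty$, and suppose $E_{\bar T_k-1}:=\frac1m\sum_{r\in[m]}\big[\sigma(-\langle\mathbf{w}^{(\bar T_k-1)}_{-y,r},-y\mathbf{u}\rangle)+\sigma(-\langle\mathbf{w}^{(\bar T_k-1)}_{-y,r},-y\mathbf{v}\rangle)\big]<\delta/2$. Then $$yf(\mathbf{x};\mathbf{W}^{(\bar T_k-1)})\ge\frac{2+\tilde\eta-\sqrt{\tilde\eta^2+4\tilde\eta}}{2\tilde\eta},$$ and $$yf(\mathbf{x};\mathbf{W}^{(\bar T_k)})\le yf(\mathbf{x};\mathbf{W}^{(\bar T_k-1)})\Big(1+\tilde\eta\big(1-yf(\mathbf{x};\mathbf{W}^{(\bar T_k-1)})\big)\Big)^2+2E_{\bar T_k-1}.$$ (This holds regardless of whether $\bar T_k$ is before or after $T_{(\mathbf{v})}$.)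
   Context: Single-data setting: $\mathbf{u},\mathbf{v}\in\mathbb{R}^d$ are fixed nonzero vectors with $\langle\mathbf{u},\mathbf{v}\rangle=0$, $y\in\{\pm1\}$, and the single training example is $(\mathbf{x},y)$ with $\mathbf{x}=(y\mathbf{u},y\mathbf{v})$. Let $\sigma(z)=(\max\{z,0\})^2$ (so $\sigma'(z)=2\max\{z,0\}$). Weights $\mathbf{W}=\{\mathbf{w}_{j,r}\}_{j\in\{\pm1\},r\in[m]}\subset\mathbb{R}^d$; network $f(\mathbf{x};\mathbf{W})=\sum_{j\in\{\pm1\}}jF_j(\mathbf{x};\mathbf{W})$ with $F_j(\mathbf{x};\mathbf{W})=\frac1m\sum_{r\in[m]}[\sigma(\langle\mathbf{w}_{j,r},y\mathbf{u}\rangle)+\sigma(\langle\mathbf{w}_{j,r},y\mathbf{v}\rangle)]$; loss $L(\mathbf{W})=\frac12(f(\mathbf{x};\mathbf{W})-y)^2$. All entries of all $\mathbf{w}^{(0)}_{j,r}$ are i.i.d. $N(0,\sigma_0^2)$, and for $t\ge0$: $\mathbf{w}^{(t+1)}_{j,r}=\mathbf{w}^{(t)}_{j,r}-\frac{\eta j}{m}(f(\mathbf{x};\mathbf{W}^{(t)})-y)\big(\sigma'(\langle\mathbf{w}^{(t)}_{j,r},y\mathbf{u}\rangle)y\mathbf{u}+\sigma'(\langle\mathbf{w}^{(t)}_{j,r},y\mathbf{v}\rangle)y\mathbf{v}\big)$ with learning rate $\eta>0$. (A1) Conditions: $m/(4\|\mathbf{u}\|_2^2)\le\eta\le2m/(5\|\mathbf{u}\|_2^2)$;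 $\sigma_0=\tilde\Theta(\max\{\|\mathbf{u}\|_2,\|\mathbf{v}\|_2\}^{-1}d^{-1/2})$; $\|\mathbf{v}\|_2<0.01\|\mathbf{u}\|_2$; $d=\Omega(\mathrm{polylog}(m))$. (A2) Oscillation: there is a constant $\delta\in(0.2,0.8)$ with $|yf(\mathbf{x};\mathbf{W}^{(t)})-1|\ge\delta$ for every $t\ge0$. Up-crossing times: $\bar T_0=0$ and, recursively, $\bar T_k=\min\{t>\bar T_{k-1}:yf(\mathbf{x};\mathbf{W}^{(t)})\ge1\text{ and }yf(\mathbf{x};\mathbf{W}^{(t-1)})<1\}$. $T_{(\mathbf{v})}=\min\{t\ge0:\frac1m\sum_{r}\sigma(\langle\mathbf{w}^{(t)}_{y,r},y\mathbf{v}\rangle)>\delta\}$. *)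

theory Defs
  imports "HOL-Analysis.Analysis"
begin

definition act :: "real \<Rightarrow> real" where
  "act z = (max z 0)^2"

definition act' :: "real \<Rightarrow> real" where
  "act' z = 2 * max z 0"

definition Fnet :: "nat \<Rightarrow> 'a::real_inner \<times> 'a \<Rightarrow> (int \<Rightarrow> nat \<Rightarrow> 'a) \<Rightarrow> int \<Rightarrow> real" where
  "Fnet m x W j = (1 / real m) * (\<Sum>r<m. act (inner (W j r) (fst x)) + act (inner (W j r) (snd x)))"

definition fnet :: "nat \<Rightarrow> 'a::real_inner \<times> 'a \<Rightarrow> (int \<Rightarrow> nat \<Rightarrow> 'a) \<Rightarrow> real" where
  "fnet m x W = (\<Sum>j\<in>{-1, 1::int}. real_of_int j * Fnet m x W j)"

text \<open>One gradient descent step on L(W) = (f(x;W) - y)^2 / 2 as given in the paper.\<close>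
definition gd_step :: "nat \<Rightarrow> real \<Rightarrow> 'a::real_inner \<times> 'a \<Rightarrow> real \<Rightarrow> (int \<Rightarrow> nat \<Rightarrow> 'a) \<Rightarrow> (int \<Rightarrow> nat \<Rightarrow> 'a)" where
  "gd_step m \<eta> x y W = (\<lambda>j r. W j r - (\<eta> * real_of_int j / real m * (fnet m x W - y)) *\<^sub>R
      (act' (inner (W j r) (fst x)) *\<^sub>R fst x + act' (inner (W j r) (snd x)) *\<^sub>R snd x))"

text \<open>Up-crossing times: Tbar g 0 = 0 and Tbar g k = min{t > Tbar g (k-1). g t >= 1 and g (t-1) < 1},
  where g t = y f(x; W^(t)).  None encodes "= infinity".\<close>
fun Tbar :: "(nat \<Rightarrow> real) \<Rightarrow> nat \<Rightarrow> nat option" where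
  "Tbar g 0 = Some 0"
| "Tbar g (Suc k) = (case Tbar g k of
      None \<Rightarrow> None
    | Some s \<Rightarrow> (if \<exists>t. t > s \<and> g t \<ge> 1 \<and> g (t - 1) < 1
                then Some (LEAST t. t > s \<and> g t \<ge> 1 \<and> g (t - 1) < 1) else None))"

end

theory Submission
  imports Defs
begin

text \<open>Let z be the margin y f at time T - 1, just before an up-crossing, and
  \<open>c = 1 + \<eta>t (1 - z)\<close>. Since u and v are orthogonal, one gradient step multiplies every
  positive pre-activation of a label neuron along y u by c, and along y v by a factor between 1
  and c, while the neurons of the other sign only lower the margin. Hence the margin at T is at
  most \<open>c\<^sup>2 (z + E)\<close>. Oscillation gives \<open>z \<le> 1 - \<delta>\<close> and a margin of at least \<open>1 + \<delta>\<close> at T; with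
  \<open>E < \<delta>/2\<close> this forces \<open>c\<^sup>2 z \<ge> 1\<close>, which says that z lies above the smaller root of
  \<open>\<eta>t\<^sup>2 z\<^sup>2 - \<eta>t (\<eta>t + 2) z + 1\<close>. For \<open>\<eta>t \<le> 4/5\<close> that root exceeds 1/2, so \<open>c\<^sup>2 \<le> 2\<close>, which
  turns \<open>c\<^sup>2 E\<close> into 2 E.\<close>

lemma act_nonneg: "0 \<le> act a"
  by (simp add: act_def)

lemma act_add_mult_max:
  assumes "0 \<le> \<kappa>"
  shows "act (a + \<kappa> * max a 0) = (1 + \<kappa>)^2 * act a"
proof (cases "0 < a")
  case True
  hence "0 < a + \<kappa> * a" using assms by (simp add: add_pos_nonneg)
  thus ?thesis using True by (simp add: act_def power2_eq_square algebra_simps)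
qed (simp add: act_def)

lemma Fnet_nonneg: "0 \<le> Fnet m x W j"
  unfolding Fnet_def by (intro mult_nonneg_nonneg sum_nonneg add_nonneg_nonneg act_nonneg) auto

lemma fnet_label_eq:
  assumes "y \<in> {-1, 1}"
  shows "real_of_int y * fnet m x W = Fnet m x W y - Fnet m x W (-y)"
  using assms by (auto simp: fnet_def)

lemma inner_relu_gradient_update:
  fixes p q w :: "'a::real_inner"
  assumes "Y * Y = 1" "inner p q = 0"
  shows "inner (w - (\<eta> * Y / M * (G - Y)) *\<^sub>R (act' (inner w p) *\<^sub>R p + act' (inner w q) *\<^sub>R q)) p
       = inner w p + (2 * \<eta> * norm p ^ 2 / M * (1 - Y * G)) * max (inner w p) 0"
proof -
  have "Y * (Y * a) = a" for a using assms(1) by (metis mult.assoc mult_1)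
  moreover have "inner q p = 0" using assms(2) by (simp add: inner_commute)
  ultimately show ?thesis
    by (simp add: act'_def inner_diff_left inner_add_left power2_norm_eq_inner
        algebra_simps diff_divide_distrib add_divide_distrib)
qed

lemma Fnet_gd_step_label_le:
  fixes p q :: "'a::real_inner"
  assumes y: "y \<in> {-1, 1}" and pq: "inner p q = 0" and "norm q \<le> norm p" "0 \<le> \<eta>"
    and "real_of_int y * fnet m (p, q) W \<le> 1"
  shows "Fnet m (p, q) (gd_step m \<eta> (p, q) (real_of_int y) W) y
       \<le> (1 + 2 * \<eta> * norm p ^ 2 / m * (1 - real_of_int y * fnet m (p, q) W))^2 * Fnet m (p, q) W y"
proof -
  define G where "G = fnet m (p, q) W"
  define Y where "Y = real_of_int y"
  define \<kappa>p where "\<kappa>p = 2 * \<eta> * norm p ^ 2 / m * (1 - Y * G)"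
  define \<kappa>q where "\<kappa>q = 2 * \<eta> * norm q ^ 2 / m * (1 - Y * G)"
  have YY: "Y * Y = 1" using y unfolding Y_def by auto
  have \<kappa>: "0 \<le> \<kappa>q" "\<kappa>q \<le> \<kappa>p"
    unfolding \<kappa>p_def \<kappa>q_def using assms unfolding G_def Y_def
    by (auto intro!: mult_right_mono divide_right_mono mult_left_mono power_mono)
  let ?W' = "gd_step m \<eta> (p, q) Y W"
  have step: "?W' y r = W y r - (\<eta> * Y / m * (G - Y)) *\<^sub>R
      (act' (inner (W y r) p) *\<^sub>R p + act' (inner (W y r) q) *\<^sub>R q)" for r
    by (simp add: gd_step_def G_def Y_def)
  have "inner (?W' y r) p = inner (W y r) p + \<kappa>p * max (inner (W y r) p) 0" for r
    unfolding step \<kappa>p_def by (rule inner_relu_gradient_update[OF YY pq])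
  moreover have "inner (?W' y r) q = inner (W y r) q + \<kappa>q * max (inner (W y r) q) 0" for r
    unfolding step add.commute[of "act' (inner _ p) *\<^sub>R p"] \<kappa>q_def
    using inner_relu_gradient_update[OF YY pq[unfolded inner_commute[of p]]] .
  ultimately have "Fnet m (p, q) ?W' y
      = (1 / m) * (\<Sum>r<m. (1 + \<kappa>p)^2 * act (inner (W y r) p) + (1 + \<kappa>q)^2 * act (inner (W y r) q))"
    using \<kappa> by (simp add: Fnet_def act_add_mult_max)
  also have "\<dots> \<le> (1 / m) * (\<Sum>r<m. (1 + \<kappa>p)^2 * act (inner (W y r) p) + (1 + \<kappa>p)^2 * act (inner (W y r) q))"
    using \<kappa> by (intro mult_left_mono sum_mono add_left_mono mult_right_mono power_mono act_nonneg) auto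
  also have "\<dots> = (1 + \<kappa>p)^2 * Fnet m (p, q) W y"
    by (simp add: Fnet_def sum_distrib_left algebra_simps)
  finally show ?thesis unfolding \<kappa>p_def G_def Y_def .
qed

lemma margin_gd_step_le:
  fixes p q :: "'a::real_inner"
  assumes y: "y \<in> {-1, 1}" and "inner p q = 0" "norm q \<le> norm p" "0 \<le> \<eta>"
    and "real_of_int y * fnet m (p, q) W \<le> 1"
  shows "real_of_int y * fnet m (p, q) (gd_step m \<eta> (p, q) (real_of_int y) W)
       \<le> (1 + 2 * \<eta> * norm p ^ 2 / m * (1 - real_of_int y * fnet m (p, q) W))^2
          * (real_of_int y * fnet m (p, q) W + Fnet m (p, q) W (-y))"
proof -
  let ?W' = "gd_step m \<eta> (p, q) (real_of_int y) W"
  have "real_of_int y * fnet m (p, q) ?W' \<le> Fnet m (p, q) ?W' y"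
    using fnet_label_eq[OF y, of m "(p, q)" ?W'] Fnet_nonneg[of m "(p, q)" ?W' "-y"] by simp
  also have "\<dots> \<le> (1 + 2 * \<eta> * norm p ^ 2 / m * (1 - real_of_int y * fnet m (p, q) W))^2 * Fnet m (p, q) W y"
    by (rule Fnet_gd_step_label_le[OF assms])
  finally show ?thesis using fnet_label_eq[OF y, of m "(p, q)" W] by simp
qed

lemma Tbar_upcrossing:
  assumes "Tbar g k = Some T" "1 \<le> k"
  shows "0 < T" "g (T - 1) < 1" "1 \<le> g T"
proof -
  obtain k' where k: "k = Suc k'" using assms(2) by (cases k) auto
  then obtain s where s: "Tbar g k' = Some s" using assms(1) by (cases "Tbar g k'") auto
  let ?P = "\<lambda>t. s < t \<and> 1 \<le> g t \<and> g (t - 1) < 1"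
  have ex: "\<exists>t. ?P t" and T: "T = (LEAST t. ?P t)"
    using assms(1) unfolding k by (auto simp: s split: if_splits)
  have "?P T" unfolding T by (rule LeastI_ex[OF ex])
  thus "0 < T" "g (T - 1) < 1" "1 \<le> g T" by auto
qed

lemma growth_factor_sq_le_two:
  fixes h s :: real
  assumes "0 \<le> h" "h \<le> 4/5" "0 \<le> s" "s \<le> 1/2"
  shows "(1 + h * s)^2 \<le> 2"
proof -
  have "h * s \<le> 4/5 * (1/2)" using assms by (intro mult_mono) auto
  hence "1 + h * s \<le> 7/5" by simp
  moreover have "0 \<le> 1 + h * s" using assms by simp
  ultimately have "(1 + h * s)^2 \<le> (7/5)^2" by (intro power_mono)
  thus ?thesis by (simp add: power2_eq_square)
qed

lemma growth_factor_overshoot: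
  fixes h s :: real
  assumes "0 \<le> h" "h \<le> 4/5" "1/2 \<le> s"
  shows "(1 + h * s)^2 * (1 - s/2) < 1 + s"
proof (cases "s \<le> 2")
  case True
  have "1 + h * s \<le> 1 + 4/5 * s" using assms by (intro add_left_mono mult_right_mono) auto
  hence "(1 + h * s)^2 \<le> (1 + 4/5 * s)^2" using assms by (intro power_mono) auto
  hence "(1 + h * s)^2 * (1 - s/2) \<le> (1 + 4/5 * s)^2 * (1 - s/2)"
    using True by (intro mult_right_mono) auto
  also have "\<dots> = 1 + s + s * (1/10 - 4/25 * s - 8/25 * s^2)"
    by (simp add: power2_eq_square field_simps)
  also have "\<dots> < 1 + s"
  proof -
    have "1/4 \<le> s^2" using power_mono[OF assms(3), of 2] by (simp add: power2_eq_square)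
    hence "1/10 - 4/25 * s - 8/25 * s^2 < 0" using assms(3) by linarith
    thus ?thesis using assms(3) by (simp add: mult_pos_neg)
  qed
  finally show ?thesis .
next
  case False
  hence "(1 + h * s)^2 * (1 - s/2) \<le> 0" by (intro mult_nonneg_nonpos) auto
  thus ?thesis using assms by linarith
qed

lemma upcrossing_quadratic_nonpos:
  fixes h z E \<delta> :: real
  assumes h: "1/2 \<le> h" "h \<le> 4/5" and E: "0 \<le> E" "E < \<delta>/2"
    and z: "z \<le> 1 - \<delta>" and overshoot: "1 + \<delta> \<le> (1 + h * (1 - z))^2 * (z + E)"
  shows "h^2 * z^2 - h * (h + 2) * z + 1 \<le> 0"
proof -
  define s where "s = 1 - z"
  define c where "c = (1 + h * s)^2"
  have s_pos: "0 < s" using E z unfolding s_def by linarith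
  \<comment> \<open>so the quadratic is nonpositive exactly when the growth factor lifts z to at least 1\<close>
  have "c * z - 1 = (z - 1) * (h^2 * z^2 - h * (h + 2) * z + 1)"
    unfolding c_def s_def by (simp add: algebra_simps power2_eq_square)
  moreover have "1 \<le> c * z"
  proof (rule ccontr)
    assume cz: "\<not> 1 \<le> c * z"
    have over: "1 + \<delta> \<le> c * z + c * E" using overshoot unfolding c_def s_def by (simp add: algebra_simps)
    have "c * E \<le> c * (\<delta>/2)" using E unfolding c_def by (intro mult_left_mono) auto
    hence "\<delta> < c * (\<delta>/2)" using over cz by linarith
    hence "\<delta> * 1 < \<delta> * (c/2)" by (simp add: algebra_simps)
    hence c2: "2 < c" using E by (simp add: mult_less_cancel_left_pos)
    have "\<delta> * (c/2 - 1) \<le> s * (c/2 - 1)" using c2 z unfolding s_def by (intro mult_right_mono) auto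
    moreover have "c * z = c - c * s" unfolding s_def by (simp add: algebra_simps)
    ultimately have "1 + s \<le> c * (1 - s/2)"
      using over \<open>c * E \<le> c * (\<delta>/2)\<close> by (simp add: algebra_simps)
    moreover have "1/2 \<le> s"
      using growth_factor_sq_le_two[of h s] c2 h s_pos unfolding c_def by fastforce
    ultimately show False using growth_factor_overshoot[of h s] h unfolding c_def by linarith
  qed
  ultimately have "0 \<le> (z - 1) * (h^2 * z^2 - h * (h + 2) * z + 1)" by linarith
  thus ?thesis using s_pos unfolding s_def by (auto simp: zero_le_mult_iff)
qed

lemma ge_smaller_root_of_quadratic_nonpos:
  fixes h z :: real
  assumes "0 < h" "h^2 * z^2 - h * (h + 2) * z + 1 \<le> 0"
  shows "(2 + h - sqrt (h^2 + 4 * h)) / (2 * h) \<le> z"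
proof -
  have "(2 * h * z - (2 + h))^2 \<le> h^2 + 4 * h"
    using assms(2) by (simp add: power2_eq_square algebra_simps)
  hence "\<bar>2 * h * z - (2 + h)\<bar> \<le> sqrt (h^2 + 4 * h)"
    using real_sqrt_le_mono by fastforce
  hence "2 + h - sqrt (h^2 + 4 * h) \<le> z * (2 * h)" by (simp add: algebra_simps)
  thus ?thesis using assms(1) by (simp add: divide_le_eq)
qed

lemma gt_half_of_quadratic_nonpos:
  fixes h z :: real
  assumes "0 < h" "h \<le> 4/5" "h^2 * z^2 - h * (h + 2) * z + 1 \<le> 0"
  shows "1/2 < z"
proof (rule ccontr)
  assume "\<not> 1/2 < z"
  hence "h * z \<le> h * (1/2)" using assms(1) by (intro mult_left_mono) auto
  hence "h * (z - 1/2) \<le> 0" and "h * z - h/2 - 2 \<le> 0"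
    by (simp_all add: right_diff_distrib)
  hence "0 \<le> h * (z - 1/2) * (h * z - h/2 - 2)" by (rule mult_nonpos_nonpos)
  moreover have "h^2 \<le> 16/25" using power_mono[OF assms(2), of 2] assms(1) by (simp add: power2_eq_square)
  moreover have "h^2 * z^2 - h * (h + 2) * z + 1 = 1 - h^2/4 - h + h * (z - 1/2) * (h * z - h/2 - 2)"
    by (simp add: power2_eq_square algebra_simps)
  ultimately show False using assms by linarith
qed

lemma upcrossing_margin_bounds:
  fixes h z zT E \<delta> :: real
  assumes h: "1/2 \<le> h" "h \<le> 4/5" and E: "0 \<le> E" "E < \<delta>/2"
    and z: "z \<le> 1 - \<delta>" and zT: "1 + \<delta> \<le> zT" "zT \<le> (1 + h * (1 - z))^2 * (z + E)"
  shows "(2 + h - sqrt (h^2 + 4 * h)) / (2 * h) \<le> z \<and> zT \<le> z * (1 + h * (1 - z))^2 + 2 * E"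
proof
  have Q: "h^2 * z^2 - h * (h + 2) * z + 1 \<le> 0"
    by (rule upcrossing_quadratic_nonpos[OF h E z]) (use zT in linarith)
  thus "(2 + h - sqrt (h^2 + 4 * h)) / (2 * h) \<le> z"
    using h by (intro ge_smaller_root_of_quadratic_nonpos) auto
  have "1/2 < z" using gt_half_of_quadratic_nonpos[OF _ h(2) Q] h by linarith
  hence "(1 + h * (1 - z))^2 \<le> 2" using h E z by (intro growth_factor_sq_le_two) auto
  hence "(1 + h * (1 - z))^2 * E \<le> 2 * E" using E by (intro mult_right_mono) auto
  thus "zT \<le> z * (1 + h * (1 - z))^2 + 2 * E" using zT by (simp add: algebra_simps)
qed

theorem mainTheorem11:
  fixes u v :: "'a::euclidean_space"
    and y :: int and m :: nat and \<eta> \<delta> :: real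
    and W :: "nat \<Rightarrow> int \<Rightarrow> nat \<Rightarrow> 'a"
    and k T :: nat
  assumes u_nz: "u \<noteq> 0" and v_nz: "v \<noteq> 0" and uv_orth: "inner u v = 0"
    and y_pm: "y \<in> {-1, 1}"
    and m_pos: "m > 0"
    and eta_lo: "real m / (4 * norm u ^ 2) \<le> \<eta>"
    and eta_hi: "\<eta> \<le> 2 * real m / (5 * norm u ^ 2)"
    and v_small: "norm v < 0.01 * norm u"
    and gd: "\<forall>t. W (Suc t) = gd_step m \<eta> (real_of_int y *\<^sub>R u, real_of_int y *\<^sub>R v) (real_of_int y) (W t)"
    and delta_range: "0.2 < \<delta>" "\<delta> < 0.8"
    and osc: "\<forall>t. \<bar>real_of_int y * fnet m (real_of_int y *\<^sub>R u, real_of_int y *\<^sub>R v) (W t) - 1\<bar> \<ge> \<delta>"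
    and k_pos: "k \<ge> 1"
    and Tk: "Tbar (\<lambda>t. real_of_int y * fnet m (real_of_int y *\<^sub>R u, real_of_int y *\<^sub>R v) (W t)) k = Some T"
    and E_small: "(1 / real m) * (\<Sum>r<m. act (- inner (W (T - 1) (-y) r) (- real_of_int y *\<^sub>R u))
                     + act (- inner (W (T - 1) (-y) r) (- real_of_int y *\<^sub>R v))) < \<delta> / 2"
  shows "let \<eta>t = 2 * \<eta> * norm u ^ 2 / real m;
             x = (real_of_int y *\<^sub>R u, real_of_int y *\<^sub>R v);
             z = real_of_int y * fnet m x (W (T - 1));
             E = (1 / real m) * (\<Sum>r<m. act (- inner (W (T - 1) (-y) r) (- real_of_int y *\<^sub>R u))
                     + act (- inner (W (T - 1) (-y) r) (- real_of_int y *\<^sub>R v)))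
         in z \<ge> (2 + \<eta>t - sqrt (\<eta>t ^ 2 + 4 * \<eta>t)) / (2 * \<eta>t)
          \<and> real_of_int y * fnet m x (W T) \<le> z * (1 + \<eta>t * (1 - z)) ^ 2 + 2 * E"
proof -
  define Y where "Y = real_of_int y"
  define x where "x = (Y *\<^sub>R u, Y *\<^sub>R v)"
  define g where "g = (\<lambda>t. Y * fnet m x (W t))"
  define z where "z = g (T - 1)"
  define E where "E = Fnet m x (W (T - 1)) (-y)"
  define h where "h = 2 * \<eta> * norm u ^ 2 / real m"
  have Y: "\<bar>Y\<bar> = 1" using y_pm unfolding Y_def by auto
  have T: "0 < T" "z < 1" "1 \<le> g T"
    using Tbar_upcrossing[OF Tk[folded Y_def x_def g_def] k_pos] unfolding z_def g_def x_def by auto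
  have osc_T: "z \<le> 1 - \<delta>" "1 + \<delta> \<le> g T"
    using osc[rule_format, of "T - 1"] osc[rule_format, of T] T
    unfolding z_def g_def x_def Y_def by auto
  have E_eq: "(1 / real m) * (\<Sum>r<m. act (- inner (W (T - 1) (-y) r) (- real_of_int y *\<^sub>R u))
                 + act (- inner (W (T - 1) (-y) r) (- real_of_int y *\<^sub>R v))) = E"
    unfolding E_def Fnet_def x_def Y_def by simp
  have "0 \<le> \<eta>" by (rule order_trans[OF _ eta_lo]) simp
  moreover have "1/2 \<le> h" "h \<le> 4/5"
    using eta_lo eta_hi u_nz m_pos unfolding h_def by (auto simp: field_simps)
  moreover have "g T \<le> (1 + h * (1 - z))^2 * (z + E)"
  proof -
    have W_T: "W T = gd_step m \<eta> x Y (W (T - 1))"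
      using gd T(1) unfolding x_def Y_def by (metis Suc_diff_1)
    have "norm (Y *\<^sub>R v) \<le> norm (Y *\<^sub>R u)" "inner (Y *\<^sub>R u) (Y *\<^sub>R v) = 0"
      using v_small uv_orth Y norm_ge_zero[of v] by (auto simp del: norm_ge_zero)
    from margin_gd_step_le[OF y_pm this(2,1) \<open>0 \<le> \<eta>\<close>, of m "W (T - 1)"]
    show ?thesis using T(2) Y unfolding W_T g_def z_def E_def h_def x_def Y_def by simp
  qed
  ultimately show ?thesis
    using upcrossing_margin_bounds[of h E \<delta> z "g T"] Fnet_nonneg[of m x] E_small osc_T
    unfolding Let_def E_eq by (simp add: g_def z_def x_def Y_def h_def E_def)
qed

end
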